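(* The following hold: (i) $(\gamma(n))_{n\ge2}$ is $\mathcal I_{\le 1/2}$-convergent to $1$; (ii) $(\tau(n))_{n\ge2}$ is $\mathcal I_{\le 1/2}$-convergent to $1$; (iii) $(N(n))_{n\ge2}$ is $\mathcal I_{\le 1/2}$-convergent to $2$. That is, for every $\varepsilon>0$ each of the sets $\{n\ge2:|\gamma(n)-1|\ge\varepsilon\}$, $\{n\ge2:|\tau(n)-1|\ge\varepsilon\}$, $\{n\ge2:|N(n)-2|\ge\varepsilon\}$ has convergence exponent at most $1/2$.
   Context: $\mathbb N$ denotes the set of positive integers. For $n\ge2$, $\gamma(n)$ is the number of representations $n=a^b$ with $a,b\in\mathbb N$; if $n=a_1^{b_1}=\cdots=a_{\gamma(n)}^{b_{\gamma(n)}}$ are all these representations, then $\tau(n)=b_1+\cdots+b_{\gamma(n)}$. $N(n)$ is the number of times $n$ occurs as an entry $\binom{m}{k}$ ($0\le k\le m$) of Pascal's triangle. For $A\subset\mathbb N$ the convergence exponent is $\lambda(A)=\inf\{t>0:\sum_{a\in A}a^{-t}<\infty\}$, and $\mathcal I_{\le 1/2}=\{A\subset\mathbb N:\lambda(A)\le 1/2\}$. A sequence $(x_n)$ is $\mathcal I$-convergent to $L$ if for every $\varepsilon>0$ the set $\{n:|x_n-L|\ge\varepsilon\}$ belongs to $\mathcal I$. *)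

theory Defs
  imports "HOL-Analysis.Analysis"
begin

definition gamma_rep :: "nat \<Rightarrow> nat" where
  "gamma_rep n = card {(a, b). a \<ge> 1 \<and> b \<ge> 1 \<and> a ^ b = n}"

definition tau_rep :: "nat \<Rightarrow> nat" where
  "tau_rep n = (\<Sum>(a, b) \<in> {(a, b). a \<ge> 1 \<and> b \<ge> 1 \<and> a ^ b = n}. b)"

definition pascal_mult :: "nat \<Rightarrow> nat" where
  "pascal_mult n = card {(m, k). k \<le> m \<and> m choose k = n}"

definition conv_exp :: "nat set \<Rightarrow> real" where
  "conv_exp A = Inf {t. t > 0 \<and> (\<lambda>a. real a powr (- t)) summable_on A}"

definition I_half :: "nat set set" where
  "I_half = {A. A \<subseteq> {1..} \<and> conv_exp A \<le> 1/2}"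

definition I_conv_from2 :: "nat set set \<Rightarrow> (nat \<Rightarrow> real) \<Rightarrow> real \<Rightarrow> bool" where
  "I_conv_from2 I x L \<longleftrightarrow> (\<forall>\<epsilon>>0. {n. n \<ge> 2 \<and> \<bar>x n - L\<bar> \<ge> \<epsilon>} \<in> I)"

end

theory Submission
  imports Defs
begin

text \<open>
  If \<open>\<gamma>(n) \<noteq> 1\<close> or \<open>\<tau>(n) \<noteq> 1\<close> then \<open>n = a^b\<close> with \<open>a, b \<ge> 2\<close>, and if \<open>N(n) \<noteq> 2\<close> then
  \<open>n = 2\<close> or \<open>n = C(m, k)\<close> with \<open>2 \<le> k \<le> m/2\<close>. Both exceptional sets are images of pairs
  \<open>(x, y)\<close> under maps of size at least \<open>c x\<^sup>2 r\<^sup>y\<close> with \<open>r > 1\<close>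
  (\<open>a^b \<ge> a\<^sup>2 2^(b-2)\<close> and \<open>C(m, k) \<ge> (m/k)^k \<ge> m\<^sup>2 (4/3)^k / 16\<close>), so for \<open>t > 1/2\<close> the sum
  of \<open>n^(-t)\<close> over them is dominated by the product of \<open>\<Sum> x^(-2t)\<close> and a geometric series.
\<close>

lemma summable_on_product_nonneg:
  fixes u w :: "nat \<Rightarrow> real"
  assumes "summable u" "summable w" "\<And>x. u x \<ge> 0" "\<And>y. w y \<ge> 0"
  shows "(\<lambda>(x, y). u x * w y) summable_on UNIV"
proof -
  have "(\<lambda>(x, y). u x * w y) summable_on Sigma UNIV (\<lambda>_. UNIV)"
  proof (rule summable_on_SigmaI)
    show "((\<lambda>y. case (x, y) of (x, y) \<Rightarrow> u x * w y) has_sum u x * suminf w) UNIV" for x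
      using has_sum_cmult_right[OF sums_nonneg_imp_has_sum[OF summable_sums[OF assms(2)] assms(4)]]
      by simp
    show "(\<lambda>x. u x * suminf w) summable_on UNIV"
      using assms by (intro summable_nonneg_imp_summable_on summable_mult2 mult_nonneg_nonneg suminf_nonneg)
  qed (use assms in auto)
  then show ?thesis by simp
qed

lemma summable_on_image_if_summable_on_comp:
  fixes g :: "'b \<Rightarrow> 'c::banach"
  assumes "(g \<circ> v) summable_on J"
  shows "g summable_on v ` J"
proof -
  let ?h = "inv_into J v"
  have "(g \<circ> v) summable_on ?h ` v ` J"
    by (rule summable_on_subset_banach[OF assms]) (auto intro: inv_into_into)
  then have "(g \<circ> v \<circ> ?h) summable_on v ` J"
    by (subst (asm) summable_on_reindex) (auto intro: inj_on_inv_into)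
  then show ?thesis
    by (rule summable_on_cong[THEN iffD1, rotated]) (auto simp: f_inv_into_f)
qed

lemma powr_neg_le_quadratic_geometric:
  fixes t c r X :: real and x y :: nat
  assumes "t > 0" "c > 0" "r > 0" "x > 0" "c * real x ^ 2 * r ^ y \<le> X"
  shows "X powr - t \<le> c powr - t * real x powr (- 2 * t) * (r powr - t) ^ y"
proof -
  have "X powr - t \<le> (c * real x ^ 2 * r ^ y) powr - t"
    by (rule powr_mono2') (use assms in auto)
  also have "\<dots> = c powr - t * (real x ^ 2) powr - t * (r ^ y) powr - t"
    using assms by (simp add: powr_mult)
  also have "(real x ^ 2) powr - t = real x powr (- 2 * t)"
    using assms powr_powr[of "real x" 2 "- t"] by (simp add: powr_numeral)
  also have "(r ^ y) powr - t = (r powr - t) ^ y"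
    using assms powr_powr[of r "real y" "- t"] powr_powr[of r "- t" "real y"]
    by (simp add: powr_realpow mult.commute)
  finally show ?thesis .
qed

lemma summable_on_image_quadratic_geometric_growth:
  fixes v :: "nat \<times> nat \<Rightarrow> nat" and t c r :: real
  assumes t: "t > 1/2" and c: "c > 0" and r: "r > 1"
    and growth: "\<And>x y. (x, y) \<in> J \<Longrightarrow> x > 0 \<and> c * real x ^ 2 * r ^ y \<le> real (v (x, y))"
  shows "(\<lambda>n. real n powr - t) summable_on v ` J"
proof (rule summable_on_image_if_summable_on_comp)
  define u where "u x = c powr - t * real x powr (- 2 * t)" for x :: nat
  define w where "w y = (r powr - t) ^ y" for y :: nat
  have "summable u"
    unfolding u_def using t by (intro summable_mult summable_real_powr_iff[THEN iffD2]) simp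
  moreover have "summable w"
    unfolding w_def using r t by (intro summable_geometric) (simp add: powr_less_one)
  ultimately have "(\<lambda>(x, y). u x * w y) summable_on UNIV"
    by (rule summable_on_product_nonneg) (simp_all add: u_def w_def)
  then have "(\<lambda>(x, y). u x * w y) summable_on J"
    by (rule summable_on_subset_banach) simp
  then show "((\<lambda>n. real n powr - t) \<circ> v) summable_on J"
  proof (rule summable_on_comparison_test)
    fix p assume "p \<in> J"
    then obtain x y where "p = (x, y)" "x > 0" "c * real x ^ 2 * r ^ y \<le> real (v (x, y))"
      using growth by (cases p) blast
    then show "((\<lambda>n. real n powr - t) \<circ> v) p \<le> (case p of (x, y) \<Rightarrow> u x * w y)"
      using powr_neg_le_quadratic_geometric[of t c r x y] t c r by (simp add: u_def w_def)
  qed simp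
qed

lemma I_half_if_summable:
  assumes "A \<subseteq> {1..}" and "\<And>t. t > 1/2 \<Longrightarrow> (\<lambda>a. real a powr - t) summable_on A"
  shows "A \<in> I_half"
proof -
  let ?S = "{t. t > 0 \<and> (\<lambda>a. real a powr - t) summable_on A}"
  have "Inf ?S \<le> t" if "t > 1/2" for t
    by (rule cInf_lower) (use that assms(2) in \<open>auto intro: bdd_belowI[of _ 0]\<close>)
  then have "Inf ?S \<le> 1/2"
    by (rule dense_ge)
  with assms(1) show ?thesis
    unfolding I_half_def conv_exp_def by simp
qed

lemma I_conv_from2_I_halfI:
  assumes "\<And>t. t > 1/2 \<Longrightarrow> (\<lambda>a. real a powr - t) summable_on E"
    and "\<And>n. n \<ge> 2 \<Longrightarrow> n \<notin> E \<Longrightarrow> x n = L"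
  shows "I_conv_from2 I_half x L"
  unfolding I_conv_from2_def
proof (intro allI impI)
  fix \<epsilon> :: real assume "\<epsilon> > 0"
  then have exceptional: "{n. n \<ge> 2 \<and> \<bar>x n - L\<bar> \<ge> \<epsilon>} \<subseteq> E"
    using assms(2) by force
  show "{n. n \<ge> 2 \<and> \<bar>x n - L\<bar> \<ge> \<epsilon>} \<in> I_half"
    by (rule I_half_if_summable)
      (auto intro: summable_on_subset_banach[OF assms(1) exceptional])
qed

lemma power_ge_quadratic_geometric:
  assumes "2 \<le> a" "2 \<le> b"
  shows "1/4 * real a ^ 2 * 2 ^ b \<le> real (a ^ b)"
proof -
  have "1/4 * real a ^ 2 * 2 ^ b = real a ^ 2 * 2 ^ (b - 2)"
    using assms by (simp add: power_diff)
  also have "\<dots> \<le> real a ^ 2 * real a ^ (b - 2)"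
    using assms by (intro mult_left_mono power_mono) auto
  also have "\<dots> = real (a ^ b)"
    using assms by (simp only: le_add_diff_inverse of_nat_power flip: power_add)
  finally show ?thesis .
qed

lemma square_times_power_two_le: "k ^ 2 * 2 ^ k \<le> 4 * 3 ^ k"
proof (induction k)
  case 0
  then show ?case by simp
next
  case (Suc k)
  show ?case
  proof (cases "k \<le> 5")
    case True
    then have "k \<in> {0, 1, 2, 3, 4, 5}" by auto
    then show ?thesis by (auto simp: power2_eq_square)
  next
    case False
    then have "6 * k \<le> k * k"
      by simp
    moreover have "2 * (Suc k) ^ 2 = 2 * (k * k) + 4 * k + 2" "3 * k ^ 2 = 3 * (k * k)"
      by (simp_all add: power2_eq_square algebra_simps)
    ultimately have "2 * (Suc k) ^ 2 \<le> 3 * k ^ 2"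
      using False by linarith
    then have "(Suc k) ^ 2 * 2 ^ Suc k \<le> 3 * (k ^ 2 * 2 ^ k)"
      by (simp add: algebra_simps)
    also have "\<dots> \<le> 3 * (4 * 3 ^ k)"
      using Suc.IH by simp
    finally show ?thesis by simp
  qed
qed

lemma binomial_ge_quadratic_geometric:
  assumes "2 \<le> k" "2 * k \<le> m"
  shows "1/16 * real m ^ 2 * (4/3) ^ k \<le> real (m choose k)"
proof -
  have k: "real k > 0" using assms by simp
  have "real (k ^ 2 * 2 ^ k) \<le> real (4 * 3 ^ k)"
    using square_times_power_two_le[of k] by (simp only: of_nat_le_iff)
  then have "real k ^ 2 * 2 ^ k \<le> 4 * 3 ^ k"
    by simp
  then have "real k ^ 2 * 2 ^ k * (2/3) ^ k \<le> 4 * 3 ^ k * (2/3) ^ k"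
    by (rule mult_right_mono) simp
  then have "real k ^ 2 * (4/3) ^ k \<le> 4 * 2 ^ k"
    by (simp add: mult.assoc flip: power_mult_distrib)
  then have "1/16 * real m ^ 2 * (4/3) ^ k \<le> (real m / real k) ^ 2 * 2 ^ (k - 2)"
    using assms k by (simp add: power_divide power_diff field_simps)
  also have "\<dots> \<le> (real m / real k) ^ 2 * (real m / real k) ^ (k - 2)"
    using assms k by (intro mult_left_mono power_mono) (auto simp: field_simps)
  also have "\<dots> = (real m / real k) ^ k"
    using assms by (simp only: le_add_diff_inverse flip: power_add)
  also have "\<dots> \<le> real (m choose k)"
    using binomial_ge_n_over_k_pow_k[of k m] assms by simp
  finally show ?thesis .
qed

definition perfect_powers :: "nat set" where
  "perfect_powers = (\<lambda>(a, b). a ^ b) ` {(a, b). 2 \<le> a \<and> 2 \<le> b}"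

definition nontrivial_binomials :: "nat set" where
  "nontrivial_binomials = (\<lambda>(m, k). m choose k) ` {(m, k). 2 \<le> k \<and> 2 * k \<le> m}"

lemma summable_on_perfect_powers:
  assumes "t > 1/2"
  shows "(\<lambda>n. real n powr - t) summable_on perfect_powers"
  unfolding perfect_powers_def
proof (rule summable_on_image_quadratic_geometric_growth[where c = "1/4" and r = 2])
  fix a b :: nat
  assume "(a, b) \<in> {(a, b). 2 \<le> a \<and> 2 \<le> b}"
  then show "a > 0 \<and> 1/4 * real a ^ 2 * 2 ^ b \<le> real ((\<lambda>(a, b). a ^ b) (a, b))"
    using power_ge_quadratic_geometric[of a b] by simp
qed (use assms in auto)

lemma summable_on_nontrivial_binomials:
  assumes "t > 1/2"
  shows "(\<lambda>n. real n powr - t) summable_on nontrivial_binomials"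
  unfolding nontrivial_binomials_def
proof (rule summable_on_image_quadratic_geometric_growth[where c = "1/16" and r = "4/3"])
  fix m k :: nat
  assume "(m, k) \<in> {(m, k). 2 \<le> k \<and> 2 * k \<le> m}"
  then show "m > 0 \<and> 1/16 * real m ^ 2 * (4/3) ^ k \<le> real ((\<lambda>(m, k). m choose k) (m, k))"
    using binomial_ge_quadratic_geometric[of k m] by simp
qed (use assms in auto)

lemma power_representations_non_perfect_power:
  assumes "n \<ge> 2" "n \<notin> perfect_powers"
  shows "{(a, b). a \<ge> 1 \<and> b \<ge> 1 \<and> a ^ b = n} = {(n, 1)}"
proof -
  have "(a, b) = (n, 1)" if "a \<ge> 1" "b \<ge> 1" "a ^ b = n" for a b
  proof -
    have "b = 1"
    proof (rule ccontr)
      assume "b \<noteq> 1"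
      moreover have "a \<noteq> 1"
        using that assms(1) by auto
      ultimately have "n \<in> perfect_powers"
        using that unfolding perfect_powers_def by force
      with assms(2) show False ..
    qed
    with that(3) show ?thesis
      by simp
  qed
  then show ?thesis
    using assms(1) by auto
qed

lemma gamma_rep_non_perfect_power:
  assumes "n \<ge> 2" "n \<notin> perfect_powers"
  shows "gamma_rep n = 1"
  unfolding gamma_rep_def power_representations_non_perfect_power[OF assms] by simp

lemma tau_rep_non_perfect_power:
  assumes "n \<ge> 2" "n \<notin> perfect_powers"
  shows "tau_rep n = 1"
  unfolding tau_rep_def power_representations_non_perfect_power[OF assms] by simp

lemma binomial_in_nontrivial_binomials:
  assumes "2 \<le> k" "k + 2 \<le> m"
  shows "m choose k \<in> nontrivial_binomials"
proof (cases "2 * k \<le> m")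
  case True
  then have "(m, k) \<in> {(m, k). 2 \<le> k \<and> 2 * k \<le> m}"
    using assms by simp
  then show ?thesis
    unfolding nontrivial_binomials_def by (rule rev_image_eqI) simp
next
  case False
  then have "(m, m - k) \<in> {(m, k). 2 \<le> k \<and> 2 * k \<le> m}"
    using assms by (simp add: case_prod_beta) arith
  then show ?thesis
    unfolding nontrivial_binomials_def
    by (rule rev_image_eqI) (use assms binomial_symmetric[of k m] in simp)
qed

lemma binomial_representations_non_nontrivial_binomial:
  assumes "n \<ge> 3" "n \<notin> nontrivial_binomials"
  shows "{(m, k). k \<le> m \<and> m choose k = n} = {(n, 1), (n, n - 1)}"
proof -
  have "(m, k) \<in> {(n, 1), (n, n - 1)}" if "k \<le> m" "m choose k = n" for m k
  proof -
    have "k \<noteq> 0" "k \<noteq> m"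
      using that assms(1) by (auto intro!: gr0I)
    moreover have "\<not> (2 \<le> k \<and> k + 2 \<le> m)"
      using binomial_in_nontrivial_binomials that(2) assms(2) by blast
    ultimately have "k = 1 \<or> k = m - 1"
      using that(1) by linarith
    moreover have "m choose (m - 1) = m"
      using \<open>k \<le> m\<close> \<open>k \<noteq> 0\<close> binomial_symmetric[of 1 m] by simp
    ultimately show ?thesis
      using that(2) by auto
  qed
  moreover have "n choose (n - 1) = n"
    using assms(1) binomial_symmetric[of 1 n] by simp
  ultimately show ?thesis
    using assms(1) by (intro equalityI subsetI) (auto simp del: insert_iff)
qed

lemma pascal_mult_non_nontrivial_binomial:
  "n \<ge> 3 \<Longrightarrow> n \<notin> nontrivial_binomials \<Longrightarrow> pascal_mult n = 2"
  by (simp add: pascal_mult_def binomial_representations_non_nontrivial_binomial)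

theorem theorem9:
  shows "I_conv_from2 I_half (\<lambda>n. real (gamma_rep n)) 1 \<and>
         I_conv_from2 I_half (\<lambda>n. real (tau_rep n)) 1 \<and>
         I_conv_from2 I_half (\<lambda>n. real (pascal_mult n)) 2"
proof (intro conjI)
  show "I_conv_from2 I_half (\<lambda>n. real (gamma_rep n)) 1"
    by (rule I_conv_from2_I_halfI[OF summable_on_perfect_powers])
      (simp_all add: gamma_rep_non_perfect_power)
  show "I_conv_from2 I_half (\<lambda>n. real (tau_rep n)) 1"
    by (rule I_conv_from2_I_halfI[OF summable_on_perfect_powers])
      (simp_all add: tau_rep_non_perfect_power)
  show "I_conv_from2 I_half (\<lambda>n. real (pascal_mult n)) 2"
  proof (rule I_conv_from2_I_halfI)
    show "(\<lambda>n. real n powr - t) summable_on insert 2 nontrivial_binomials" if "t > 1/2" for t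
      using summable_on_nontrivial_binomials[OF that] by (simp add: summable_on_insert_iff)
    show "real (pascal_mult n) = 2" if "n \<ge> 2" "n \<notin> insert 2 nontrivial_binomials" for n
      using that by (simp add: pascal_mult_non_nontrivial_binomial)
  qed
qed

end
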